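(* Let $G$ be a vertex-weighted complex digraph (as defined in the context). Then the underlying undirected graph of $G$ is connected if and only if the algebraic multiplicity of the eigenvalue $0$ of the combinatorial Laplacian $L(G)$ is exactly $1$.
   Context: A vertex-weighted complex digraph is $G=(V,E)$ with $V=\{1,\dots,n\}$, $E\subseteq\{(i,j)\in V\times V:i\neq j\}$ such that for $i\neq j$ at most one of $(i,j),(j,i)$ lies in $E$, together with nonzero complex vertex weights $w_1,\dots,w_n\in\mathbb C\setminus\{0\}$; for each $i$ fix a square root $s_i$ with $s_i^2=w_i$. Vertices $i\neq j$ are adjacent iff $(i,j)\in E$ or $(j,i)\in E$. The adjacency matrix $A(G)$ has $A_{ij}=\overline{s_i}\,s_j$ if $i,j$ are adjacent and $A_{ij}=0$ otherwise. The degree of vertex $i$ is $d_i=\sum_{j \text{ adjacent to } i}|w_j|$, $D(G)=\mathrm{diag}(d_1,\dots,d_n)$, the combinatorial Laplacian is $L(G)=D(G)-A(G)$ and the signless Laplacian is $Q(G)=D(G)+A(G)$; both are Hermitian positive semidefinite. Connectivity, connected components and cycles refer to the underlying undirected graph. *)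

theory Defs
  imports "Jordan_Normal_Form.Char_Poly"
begin

text \<open>Vertices are 0,...,n-1 (a relabelling of 1,...,n, matching matrix indexing).\<close>

definition adjacent :: "(nat \<times> nat) set \<Rightarrow> nat \<Rightarrow> nat \<Rightarrow> bool" where
  "adjacent E i j \<longleftrightarrow> (i, j) \<in> E \<or> (j, i) \<in> E"

definition vw_complex_digraph ::
  "nat \<Rightarrow> (nat \<times> nat) set \<Rightarrow> (nat \<Rightarrow> complex) \<Rightarrow> (nat \<Rightarrow> complex) \<Rightarrow> bool" where
  "vw_complex_digraph n E w s \<longleftrightarrow>
     E \<subseteq> {0..<n} \<times> {0..<n} \<and>
     (\<forall>(i, j) \<in> E. i \<noteq> j) \<and>
     (\<forall>i j. (i, j) \<in> E \<longrightarrow> (j, i) \<notin> E) \<and>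
     (\<forall>i < n. w i \<noteq> 0) \<and>
     (\<forall>i < n. (s i)\<^sup>2 = w i)"

definition adj_matrix :: "nat \<Rightarrow> (nat \<times> nat) set \<Rightarrow> (nat \<Rightarrow> complex) \<Rightarrow> complex mat" where
  "adj_matrix n E s = mat n n (\<lambda>(i, j). if adjacent E i j then cnj (s i) * s j else 0)"

definition vdegree :: "nat \<Rightarrow> (nat \<times> nat) set \<Rightarrow> (nat \<Rightarrow> complex) \<Rightarrow> nat \<Rightarrow> real" where
  "vdegree n E w i = (\<Sum>j \<in> {j. j < n \<and> adjacent E i j}. cmod (w j))"

definition degree_matrix :: "nat \<Rightarrow> (nat \<times> nat) set \<Rightarrow> (nat \<Rightarrow> complex) \<Rightarrow> complex mat" where
  "degree_matrix n E w = mat n n (\<lambda>(i, j). if i = j then complex_of_real (vdegree n E w i) else 0)"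

definition laplacian ::
  "nat \<Rightarrow> (nat \<times> nat) set \<Rightarrow> (nat \<Rightarrow> complex) \<Rightarrow> (nat \<Rightarrow> complex) \<Rightarrow> complex mat" where
  "laplacian n E w s = degree_matrix n E w - adj_matrix n E s"

definition underlying_connected :: "nat \<Rightarrow> (nat \<times> nat) set \<Rightarrow> bool" where
  "underlying_connected n E \<longleftrightarrow>
     (\<forall>i < n. \<forall>j < n. (i, j) \<in> {(a, b). a < n \<and> b < n \<and> adjacent E a b}\<^sup>*)"

definition alg_multiplicity :: "complex mat \<Rightarrow> complex \<Rightarrow> nat" where
  "alg_multiplicity A c = order c (char_poly A)"

end

theory Submission
  imports Defs "Jordan_Normal_Form.Jordan_Normal_Form_Uniqueness"
    "Jordan_Normal_Form.Jordan_Normal_Form_Existence"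
begin

(* The algebraic multiplicity of 0 for L = L(G) equals dim ker L, and
   dim ker L = 1 exactly when the underlying graph is connected.
   (1) L is Hermitian, and for a Hermitian H we have ker (H*H) = ker H, because
       H(Hv) = 0 gives |Hv|^2 = <v, H(Hv)> = 0.
   (2) For a square complex matrix A with ker (A*A) = ker A, all Jordan blocks of A for
       the eigenvalue 0 have size 1, so the order of 0 as a root of the characteristic
       polynomial is dim ker A.
   (3) With y_i = v_i / cnj (s_i) one has (Lv)_i = cnj (s_i) * sum_{j~i} |w_j| (y_i - y_j).
       A weighted Dirichlet-energy argument shows that such "harmonic" y are constant
       along edges, hence constant on connected components; conversely every y that is
       constant on components gives a kernel vector.
   (4) If the graph is connected, ker L is spanned by (cnj s_i)_i; otherwise the kernel
       vectors supported on one component and on its complement are not proportional. *)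

subsection \<open>Hermitian matrices\<close>

definition hermitian :: "complex mat \<Rightarrow> bool" where
  "hermitian H \<longleftrightarrow> (\<forall>i < dim_row H. \<forall>j < dim_col H. H $$ (i, j) = cnj (H $$ (j, i)))"

lemma hermitianD:
  assumes "hermitian H" and "H \<in> carrier_mat n n" and "i < n" and "j < n"
  shows "H $$ (i, j) = cnj (H $$ (j, i))"
  using assms unfolding hermitian_def by (metis carrier_matD)

lemma hermitian_transpose_conjugate:
  assumes H: "H \<in> carrier_mat n n" and herm: "hermitian H" and w: "w \<in> carrier_vec n"
  shows "transpose_mat H *\<^sub>v conjugate w = conjugate (H *\<^sub>v w)"
proof (rule eq_vecI)
  fix i assume "i < dim_vec (conjugate (H *\<^sub>v w))"
  hence i: "i < n" using H by simp
  have "(transpose_mat H *\<^sub>v conjugate w) $ i = (\<Sum>j = 0..<n. H $$ (j, i) * cnj (w $ j))"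
    using H w i by (simp add: scalar_prod_def)
  also have "\<dots> = (\<Sum>j = 0..<n. cnj (H $$ (i, j)) * cnj (w $ j))"
  proof (rule sum.cong[OF refl])
    fix j assume "j \<in> {0..<n}"
    thus "H $$ (j, i) * cnj (w $ j) = cnj (H $$ (i, j)) * cnj (w $ j)"
      using hermitianD[OF herm H, of j i] i by simp
  qed
  also have "\<dots> = conjugate (H *\<^sub>v w) $ i"
    using H w i by (simp add: scalar_prod_def)
  finally show "(transpose_mat H *\<^sub>v conjugate w) $ i = conjugate (H *\<^sub>v w) $ i" .
qed (use H in auto)

lemma hermitian_kernel_square:
  assumes H: "H \<in> carrier_mat n n" and herm: "hermitian H"
  shows "mat_kernel (H * H) = mat_kernel H"
proof (rule equalityI)
  show "mat_kernel (H * H) \<subseteq> mat_kernel H"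
  proof
    fix v assume "v \<in> mat_kernel (H * H)"
    hence v: "v \<in> carrier_vec n" and "(H * H) *\<^sub>v v = 0\<^sub>v n"
      using mat_kernelD[of "H * H" n n v] H by auto
    hence HHv: "H *\<^sub>v (H *\<^sub>v v) = 0\<^sub>v n" using assoc_mult_mat_vec[OF H H v] by simp
    define w where "w = H *\<^sub>v v"
    have w: "w \<in> carrier_vec n" using H v by (simp add: w_def)
    txt \<open>|w|^2 = (H v) . conj w = v . (H^T conj w) = v . conj (H w) = 0.\<close>
    have "w \<bullet>c w = (transpose_mat (transpose_mat H) *\<^sub>v v) \<bullet> conjugate w"
      by (simp add: w_def)
    also have "\<dots> = v \<bullet> (transpose_mat H *\<^sub>v conjugate w)"
      using H v w by (intro transpose_vec_mult_scalar) auto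
    also have "\<dots> = 0"
      using hermitian_transpose_conjugate[OF H herm w] HHv v by (simp add: w_def)
    finally have "w = 0\<^sub>v n" using conjugate_square_eq_0_vec[OF w] by simp
    thus "v \<in> mat_kernel H" using mat_kernelI[OF H v] by (simp add: w_def)
  qed
  show "mat_kernel H \<subseteq> mat_kernel (H * H)" by (rule mat_kernel_mult_subset[OF H H])
qed

subsection \<open>Algebraic multiplicity of a semisimple eigenvalue 0\<close>

text \<open>If a list of Jordan block sizes has the same sum after truncation at 2 as after
  truncation at 1, every block has size at most 1, so the list sums to its truncation at 1.\<close>
lemma sum_list_min_two_eq_min_one:
  fixes xs :: "nat list"
  assumes "sum_list (map (min 2) xs) = sum_list (map (min 1) xs)"
  shows "sum_list xs = sum_list (map (min 1) xs)"
  using assms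
proof (induction xs)
  case (Cons x xs)
  have "sum_list (map (min 1) xs) \<le> sum_list (map (min (2::nat)) xs)"
    by (rule sum_list_mono) simp
  with Cons.prems have "x \<le> 1" and "sum_list (map (min 2) xs) = sum_list (map (min 1) xs)"
    by auto
  with Cons.IH show ?case by simp
qed simp

text \<open>If ker (A*A) = ker A, every Jordan block of A for the eigenvalue 0 has size 1, so the
  algebraic multiplicity of 0 equals the geometric one.\<close>
lemma order_zero_char_poly_eq_kernel_dim:
  fixes A :: "complex mat"
  assumes A: "A \<in> carrier_mat n n" and K: "mat_kernel (A * A) = mat_kernel A"
  shows "Polynomial.order 0 (char_poly A) = kernel_dim A"
proof -
  obtain n_as where jnf: "jordan_nf A n_as"
    using char_poly_factorized[OF A] jordan_nf_exists[OF A] by blast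
  define sizes where "sizes = map fst [(k, e) \<leftarrow> n_as. e = 0]"
  have order: "Polynomial.order 0 (char_poly A) = sum_list sizes"
    unfolding sizes_def jordan_nf_order[OF jnf] by (simp add: case_prod_beta')
  have gen: "dim_gen_eigenspace A 0 k = sum_list (map (min k) sizes)" for k
    unfolding sizes_def dim_gen_eigenspace[OF jnf] by simp
  have "char_matrix A 0 = A" using A by (auto simp: char_matrix_def)
  hence pow1: "char_matrix A 0 ^\<^sub>m 1 = A" and pow2: "char_matrix A 0 ^\<^sub>m 2 = A * A"
    using A by (simp_all add: numeral_2_eq_2)
  have gen1: "dim_gen_eigenspace A 0 1 = kernel_dim A"
    unfolding dim_gen_eigenspace_def pow1 ..
  have gen2: "dim_gen_eigenspace A 0 2 = kernel_dim A"
    unfolding dim_gen_eigenspace_def pow2 kernel_dim_def using A K by simp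
  have "sum_list (map (min 2) sizes) = sum_list (map (min 1) sizes)"
    using gen[of 1] gen[of 2] gen1 gen2 by simp
  from sum_list_min_two_eq_min_one[OF this] show ?thesis
    using order gen[of 1] gen1 by simp
qed

lemma (in kernel) span_singleton:
  assumes b: "b \<in> mat_kernel A"
  shows "Ker.span {b} = {c \<cdot>\<^sub>v b | c. True}"
proof -
  have lincomb: "Ker.lincomb f {b} = f b \<cdot>\<^sub>v b" for f
    using b Ker.smult_closed[of "f b" b] unfolding Ker.lincomb_def
    by simp
  show ?thesis
  proof (intro equalityI subsetI)
    fix v assume "v \<in> Ker.span {b}"
    then obtain f B where v: "v = Ker.lincomb f B" and B: "B \<subseteq> {b}"
      unfolding Ker.span_def by auto
    from B have "B = {} \<or> B = {b}" by auto
    thus "v \<in> {c \<cdot>\<^sub>v b | c. True}"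
    proof
      assume "B = {}"
      hence "v = 0 \<cdot>\<^sub>v b" using v b A mat_kernelD(1)[of A nr nc b] by auto
      thus ?thesis by blast
    qed (use v lincomb in auto)
  next
    fix v assume "v \<in> {c \<cdot>\<^sub>v b | c. True}"
    then obtain c where "v = Ker.lincomb (\<lambda>_. c) {b}" using lincomb by auto
    thus "v \<in> Ker.span {b}" unfolding Ker.span_def by blast
  qed
qed

lemma kernel_dim_eq_1I:
  assumes A: "A \<in> carrier_mat n n" and u: "u \<in> mat_kernel A" "u \<noteq> 0\<^sub>v n"
    and multiples: "\<And>v. v \<in> mat_kernel A \<Longrightarrow> \<exists>c. v = c \<cdot>\<^sub>v u"
  shows "kernel_dim A = 1"
proof -
  interpret K: kernel n n A by unfold_locales (rule A)
  have "K.Ker.span {u} = mat_kernel A"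
    using K.span_singleton[OF u(1)] multiples u(1) K.Ker.smult_closed by auto
  hence "K.Ker.dim = 1" using u by (intro K.Ker.dim1I) auto
  thus ?thesis by simp
qed

lemma kernel_dim_eq_1D:
  assumes A: "A \<in> carrier_mat n n" and dim: "kernel_dim A = 1"
    and u: "u \<in> mat_kernel A" "u \<noteq> 0\<^sub>v n" and v: "v \<in> mat_kernel A"
  shows "\<exists>c. v = c \<cdot>\<^sub>v u"
proof -
  interpret K: kernel n n A by unfold_locales (rule A)
  obtain B where "finite B" and basis: "K.Ker.basis B"
    using kernel_basis_exists[OF A] by blast
  with dim have "card B = 1" using K.Ker.dim_basis by simp
  then obtain b where "B = {b}" by (rule card_1_singletonE)
  with basis have span: "K.Ker.span {b} = mat_kernel A" and b: "b \<in> mat_kernel A"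
    unfolding K.Ker.basis_def by auto
  obtain cu where cu: "u = cu \<cdot>\<^sub>v b" using u(1) span K.span_singleton[OF b] by auto
  obtain cv where cv: "v = cv \<cdot>\<^sub>v b" using v span K.span_singleton[OF b] by auto
  have "cu \<noteq> 0" using u(2) cu b A mat_kernelD(1)[of A n n b] by auto
  hence "v = (cv / cu) \<cdot>\<^sub>v u" by (simp add: cu cv smult_smult_assoc)
  thus ?thesis ..
qed

subsection \<open>Harmonic functions on weighted graphs\<close>

lemma sum_neighbours:
  fixes n :: nat and f :: "nat \<Rightarrow> 'a::comm_monoid_add"
  shows "(\<Sum>j | j < n \<and> adj j. f j) = (\<Sum>j<n. if adj j then f j else 0)"
proof -
  have "{j. j < n \<and> adj j} = {j \<in> {..<n}. adj j}" by auto
  thus ?thesis by (simp only: sum.inter_filter[OF finite_lessThan])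
qed

text \<open>Energy identity: pairing the weighted Laplacian of y with y and symmetrising over the
  (symmetric) adjacency gives twice the Dirichlet energy, a sum of nonnegative edge terms.\<close>
lemma dirichlet_energy_identity:
  fixes y :: "nat \<Rightarrow> complex" and c :: "nat \<Rightarrow> real" and adj :: "nat \<Rightarrow> nat \<Rightarrow> bool"
  assumes adj_sym: "\<And>i j. adj i j \<Longrightarrow> adj j i"
  shows "2 * (\<Sum>i<n. of_real (c i) * cnj (y i) *
                 (\<Sum>j | j < n \<and> adj i j. of_real (c j) * (y i - y j)))
       = of_real (\<Sum>i<n. \<Sum>j | j < n \<and> adj i j. c i * c j * (cmod (y i - y j))\<^sup>2)"
proof -
  define T where
    "T i j = (if adj i j then of_real (c i * c j) * (cnj (y i) * (y i - y j)) else 0)" for i j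
  have rows: "of_real (c i) * cnj (y i) * (\<Sum>j | j < n \<and> adj i j. of_real (c j) * (y i - y j))
      = (\<Sum>j<n. T i j)" for i
    unfolding sum_neighbours sum_distrib_left T_def by (intro sum.cong) (auto simp: algebra_simps)
  have pairs: "T i j + T j i
      = of_real (if adj i j then c i * c j * (cmod (y i - y j))\<^sup>2 else 0)" for i j
  proof (cases "adj i j")
    case True
    have "T i j + T j i
        = of_real (c i * c j) * (cnj (y i) * (y i - y j) + cnj (y j) * (y j - y i))"
      using True adj_sym[OF True] unfolding T_def by (simp add: algebra_simps)
    also have "cnj (y i) * (y i - y j) + cnj (y j) * (y j - y i) = (y i - y j) * cnj (y i - y j)"
      by (simp add: algebra_simps)
    also have "\<dots> = of_real ((cmod (y i - y j))\<^sup>2)" by (rule complex_norm_square[symmetric])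
    finally show ?thesis using True by simp
  next
    case False
    moreover have "\<not> adj j i" using False adj_sym by blast
    ultimately show ?thesis unfolding T_def by simp
  qed
  have "2 * (\<Sum>i<n. of_real (c i) * cnj (y i) *
                 (\<Sum>j | j < n \<and> adj i j. of_real (c j) * (y i - y j)))
      = (\<Sum>i<n. \<Sum>j<n. T i j) + (\<Sum>i<n. \<Sum>j<n. T j i)"
    using sum.swap[of "\<lambda>i j. T j i" "{..<n}" "{..<n}"] by (simp only: rows mult_2)
  also have "\<dots> = (\<Sum>i<n. \<Sum>j<n. T i j + T j i)" by (simp add: sum.distrib)
  also have "\<dots> = of_real (\<Sum>i<n. \<Sum>j | j < n \<and> adj i j. c i * c j * (cmod (y i - y j))\<^sup>2)"
    by (simp add: pairs sum_neighbours)
  finally show ?thesis .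
qed

text \<open>With positive vertex weights, a function whose weighted Laplacian vanishes at every
  vertex is constant along every edge: its Dirichlet energy is zero.\<close>
lemma harmonic_constant_on_edges:
  fixes y :: "nat \<Rightarrow> complex" and c :: "nat \<Rightarrow> real" and adj :: "nat \<Rightarrow> nat \<Rightarrow> bool"
  assumes adj_sym: "\<And>i j. adj i j \<Longrightarrow> adj j i"
    and c_pos: "\<And>i. i < n \<Longrightarrow> c i > 0"
    and harmonic: "\<And>i. i < n \<Longrightarrow> (\<Sum>j | j < n \<and> adj i j. of_real (c j) * (y i - y j)) = 0"
    and ij: "i < n" "j < n" "adj i j"
  shows "y i = y j"
proof -
  define R where "R a b = c a * c b * (cmod (y a - y b))\<^sup>2" for a b
  have R_nonneg: "R a b \<ge> 0" if "a < n" "b < n" for a b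
    using c_pos[OF that(1)] c_pos[OF that(2)] unfolding R_def by simp
  have "of_real (\<Sum>a<n. \<Sum>b | b < n \<and> adj a b. R a b) = (0::complex)"
    using dirichlet_energy_identity[where adj = adj and n = n and c = c and y = y, OF adj_sym]
      harmonic unfolding R_def by simp
  hence energy0: "(\<Sum>a<n. \<Sum>b | b < n \<and> adj a b. R a b) = 0"
    by (simp only: of_real_eq_0_iff)
  have "(\<Sum>b | b < n \<and> adj i b. R i b) = 0"
    using energy0 ij(1) by (subst (asm) sum_nonneg_eq_0_iff) (auto intro!: sum_nonneg R_nonneg)
  hence "R i j = 0"
    using ij by (subst (asm) sum_nonneg_eq_0_iff) (auto intro!: R_nonneg)
  thus ?thesis using c_pos[OF ij(1)] c_pos[OF ij(2)] unfolding R_def by simp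
qed

subsection \<open>The Laplacian of a vertex-weighted complex digraph\<close>

lemma adjacent_sym: "adjacent E i j \<longleftrightarrow> adjacent E j i"
  unfolding adjacent_def by auto

lemma vw_digraph_sqrt_nonzero:
  assumes "vw_complex_digraph n E w s" and "i < n"
  shows "s i \<noteq> 0"
  using assms unfolding vw_complex_digraph_def by (metis power_zero_numeral)

lemma vw_digraph_weight_pos:
  assumes "vw_complex_digraph n E w s" and "i < n"
  shows "cmod (w i) > 0"
  using assms unfolding vw_complex_digraph_def by auto

lemma vw_digraph_sqrt_norm:
  assumes "vw_complex_digraph n E w s" and "i < n"
  shows "s i * cnj (s i) = of_real (cmod (w i))"
proof -
  have "w i = (s i)\<^sup>2" using assms unfolding vw_complex_digraph_def by auto
  hence "cmod (w i) = (cmod (s i))\<^sup>2" by (simp add: norm_power)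
  thus ?thesis by (metis complex_norm_square)
qed

lemma laplacian_carrier: "laplacian n E w s \<in> carrier_mat n n"
  unfolding laplacian_def degree_matrix_def adj_matrix_def by auto

lemma laplacian_entry:
  assumes "i < n" and "j < n"
  shows "laplacian n E w s $$ (i, j) =
    (if i = j then of_real (vdegree n E w i) else 0) - (if adjacent E i j then cnj (s i) * s j else 0)"
  using assms unfolding laplacian_def degree_matrix_def adj_matrix_def by auto

lemma laplacian_hermitian: "hermitian (laplacian n E w s)"
  using laplacian_carrier[of n E w s] unfolding hermitian_def
  by (auto simp: laplacian_entry adjacent_sym)

text \<open>The contribution of the edge ij to row i of L v, in terms of the rescaled entries.\<close>
lemma laplacian_edge_term:
  assumes G: "vw_complex_digraph n E w s" and i: "i < n" and j: "j < n"
  shows "of_real (cmod (w j)) * x - cnj (s i) * s j * z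
    = cnj (s i) * (of_real (cmod (w j)) * (x / cnj (s i) - z / cnj (s j)))"
proof -
  have "cnj (s i) \<noteq> 0" "cnj (s j) \<noteq> 0"
    using vw_digraph_sqrt_nonzero[OF G i] vw_digraph_sqrt_nonzero[OF G j] by auto
  thus ?thesis unfolding vw_digraph_sqrt_norm[OF G j, symmetric] by (simp add: field_simps)
qed

lemma laplacian_mult_vec:
  assumes G: "vw_complex_digraph n E w s" and v: "v \<in> carrier_vec n" and i: "i < n"
  shows "(laplacian n E w s *\<^sub>v v) $ i = cnj (s i) *
     (\<Sum>j | j < n \<and> adjacent E i j. of_real (cmod (w j)) * (v $ i / cnj (s i) - v $ j / cnj (s j)))"
proof -
  let ?L = "laplacian n E w s" and ?deg = "of_real (vdegree n E w i) :: complex"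
  have "(?L *\<^sub>v v) $ i = (\<Sum>j<n. ?L $$ (i, j) * v $ j)"
    using v i laplacian_carrier[of n E w s] by (simp add: scalar_prod_def lessThan_atLeast0)
  also have "\<dots> = (\<Sum>j<n. if i = j then ?deg * v $ j else 0)
      - (\<Sum>j<n. if adjacent E i j then cnj (s i) * s j * v $ j else 0)"
    unfolding sum_subtractf[symmetric] using i
    by (intro sum.cong) (auto simp: laplacian_entry left_diff_distrib)
  also have "(\<Sum>j<n. if i = j then ?deg * v $ j else 0) = ?deg * v $ i"
    using i by simp
  also have "?deg * v $ i = (\<Sum>j<n. if adjacent E i j then of_real (cmod (w j)) * v $ i else 0)"
    unfolding vdegree_def sum_neighbours of_real_sum sum_distrib_right by (intro sum.cong) auto
  also have "(\<Sum>j<n. if adjacent E i j then of_real (cmod (w j)) * v $ i else 0)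
      - (\<Sum>j<n. if adjacent E i j then cnj (s i) * s j * v $ j else 0)
      = (\<Sum>j<n. if adjacent E i j
           then cnj (s i) * (of_real (cmod (w j)) * (v $ i / cnj (s i) - v $ j / cnj (s j)))
           else 0)"
    unfolding sum_subtractf[symmetric] by (intro sum.cong) (simp_all add: laplacian_edge_term[OF G i])
  also have "\<dots> = cnj (s i) * (\<Sum>j<n. if adjacent E i j
      then of_real (cmod (w j)) * (v $ i / cnj (s i) - v $ j / cnj (s j)) else 0)"
    unfolding sum_distrib_left by (intro sum.cong) auto
  finally show ?thesis unfolding sum_neighbours .
qed

lemma laplacian_kernel_iff:
  assumes G: "vw_complex_digraph n E w s" and v: "v \<in> carrier_vec n"
  shows "laplacian n E w s *\<^sub>v v = 0\<^sub>v n \<longleftrightarrow>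
    (\<forall>i<n. \<forall>j<n. adjacent E i j \<longrightarrow> v $ i / cnj (s i) = v $ j / cnj (s j))"
proof
  define y where "y k = v $ k / cnj (s k)" for k
  assume zero: "laplacian n E w s *\<^sub>v v = 0\<^sub>v n"
  have harmonic: "(\<Sum>j | j < n \<and> adjacent E i j. of_real (cmod (w j)) * (y i - y j)) = 0"
    if i: "i < n" for i
    using laplacian_mult_vec[OF G v i] zero i vw_digraph_sqrt_nonzero[OF G i]
    unfolding y_def by simp
  show "\<forall>i<n. \<forall>j<n. adjacent E i j \<longrightarrow> v $ i / cnj (s i) = v $ j / cnj (s j)"
    using harmonic_constant_on_edges[of "adjacent E" n "\<lambda>k. cmod (w k)" y]
      adjacent_sym vw_digraph_weight_pos[OF G] harmonic unfolding y_def by blast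
next
  assume const: "\<forall>i<n. \<forall>j<n. adjacent E i j \<longrightarrow> v $ i / cnj (s i) = v $ j / cnj (s j)"
  show "laplacian n E w s *\<^sub>v v = 0\<^sub>v n"
  proof (rule eq_vecI)
    fix i assume "i < dim_vec (0\<^sub>v n :: complex vec)"
    hence i: "i < n" by simp
    have "(\<Sum>j | j < n \<and> adjacent E i j.
        of_real (cmod (w j)) * (v $ i / cnj (s i) - v $ j / cnj (s j))) = 0"
    proof (rule sum.neutral, rule ballI)
      fix j assume "j \<in> {j. j < n \<and> adjacent E i j}"
      hence "v $ i / cnj (s i) = v $ j / cnj (s j)" using const i by blast
      thus "of_real (cmod (w j)) * (v $ i / cnj (s i) - v $ j / cnj (s j)) = 0" by simp
    qed
    thus "(laplacian n E w s *\<^sub>v v) $ i = 0\<^sub>v n $ i"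
      using laplacian_mult_vec[OF G v i] i by simp
  qed (use laplacian_carrier[of n E w s] in simp)
qed

definition edge_relation :: "nat \<Rightarrow> (nat \<times> nat) set \<Rightarrow> (nat \<times> nat) set" where
  "edge_relation n E = {(a, b). a < n \<and> b < n \<and> adjacent E a b}"

lemma underlying_connected_iff:
  "underlying_connected n E \<longleftrightarrow> (\<forall>i<n. \<forall>j<n. (i, j) \<in> (edge_relation n E)\<^sup>*)"
  unfolding underlying_connected_def edge_relation_def ..

lemma laplacian_kernel_constant_on_components:
  assumes G: "vw_complex_digraph n E w s" and v: "v \<in> carrier_vec n"
    and zero: "laplacian n E w s *\<^sub>v v = 0\<^sub>v n"
    and path: "(a, b) \<in> (edge_relation n E)\<^sup>*"
  shows "v $ a / cnj (s a) = v $ b / cnj (s b)"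
  using path
proof (induction rule: rtrancl_induct)
  case (step b c)
  with laplacian_kernel_iff[OF G v] zero show ?case by (auto simp: edge_relation_def)
qed simp

definition component_vec :: "nat \<Rightarrow> (nat \<Rightarrow> complex) \<Rightarrow> (nat \<Rightarrow> bool) \<Rightarrow> complex vec" where
  "component_vec n s P = vec n (\<lambda>k. if P k then cnj (s k) else 0)"

lemma component_vec_in_kernel:
  assumes G: "vw_complex_digraph n E w s"
    and closed: "\<And>a b. a < n \<Longrightarrow> b < n \<Longrightarrow> adjacent E a b \<Longrightarrow> P a \<longleftrightarrow> P b"
  shows "component_vec n s P \<in> mat_kernel (laplacian n E w s)"
proof (rule mat_kernelI[OF laplacian_carrier])
  show carrier: "component_vec n s P \<in> carrier_vec n" unfolding component_vec_def by simp
  show "laplacian n E w s *\<^sub>v component_vec n s P = 0\<^sub>v n"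
    unfolding laplacian_kernel_iff[OF G carrier]
  proof (intro allI impI)
    fix a b assume "a < n" "b < n" "adjacent E a b"
    with closed have "P a \<longleftrightarrow> P b" by blast
    thus "component_vec n s P $ a / cnj (s a) = component_vec n s P $ b / cnj (s b)"
      using \<open>a < n\<close> \<open>b < n\<close> vw_digraph_sqrt_nonzero[OF G] by (simp add: component_vec_def)
  qed
qed

lemma component_vec_nonzero:
  assumes G: "vw_complex_digraph n E w s" and i: "i < n" "P i"
  shows "component_vec n s P \<noteq> 0\<^sub>v n"
proof
  assume "component_vec n s P = 0\<^sub>v n"
  hence "component_vec n s P $ i = 0" using i by simp
  thus False using i vw_digraph_sqrt_nonzero[OF G i(1)] by (simp add: component_vec_def)
qed

text \<open>For a connected graph the kernel is spanned by the vector (cnj s_k)_k.\<close>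
lemma connected_kernel_dim:
  assumes G: "vw_complex_digraph n E w s" and n: "n \<ge> 1" and conn: "underlying_connected n E"
  shows "kernel_dim (laplacian n E w s) = 1"
proof -
  let ?u = "component_vec n s (\<lambda>_. True)"
  have uK: "?u \<in> mat_kernel (laplacian n E w s)" by (rule component_vec_in_kernel[OF G]) simp
  have u0: "?u \<noteq> 0\<^sub>v n" using component_vec_nonzero[OF G, of 0] n by simp
  have "\<exists>c. v = c \<cdot>\<^sub>v ?u" if vK: "v \<in> mat_kernel (laplacian n E w s)" for v
  proof -
    have v: "v \<in> carrier_vec n" and zero: "laplacian n E w s *\<^sub>v v = 0\<^sub>v n"
      using mat_kernelD[OF laplacian_carrier vK] by auto
    have "v = (v $ 0 / cnj (s 0)) \<cdot>\<^sub>v ?u"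
    proof (rule eq_vecI)
      fix i assume "i < dim_vec ((v $ 0 / cnj (s 0)) \<cdot>\<^sub>v ?u)"
      hence i: "i < n" by (simp add: component_vec_def)
      have "(0, i) \<in> (edge_relation n E)\<^sup>*" using conn i n by (simp add: underlying_connected_iff)
      hence "v $ 0 / cnj (s 0) = v $ i / cnj (s i)"
        by (rule laplacian_kernel_constant_on_components[OF G v zero])
      thus "v $ i = ((v $ 0 / cnj (s 0)) \<cdot>\<^sub>v ?u) $ i"
        using i vw_digraph_sqrt_nonzero[OF G i] by (simp add: component_vec_def)
    qed (use v in \<open>simp add: component_vec_def\<close>)
    thus ?thesis ..
  qed
  thus ?thesis by (rule kernel_dim_eq_1I[OF laplacian_carrier uK u0])
qed

text \<open>For a disconnected graph, the component vectors of one component and of its complement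
  are two kernel vectors that are not proportional.\<close>
lemma disconnected_kernel_dim:
  assumes G: "vw_complex_digraph n E w s" and nconn: "\<not> underlying_connected n E"
  shows "kernel_dim (laplacian n E w s) \<noteq> 1"
proof
  assume dim: "kernel_dim (laplacian n E w s) = 1"
  obtain i j where i: "i < n" and j: "j < n" and ij: "(i, j) \<notin> (edge_relation n E)\<^sup>*"
    using nconn unfolding underlying_connected_iff by auto
  define P where "P k \<longleftrightarrow> (i, k) \<in> (edge_relation n E)\<^sup>*" for k
  have closed: "P a \<longleftrightarrow> P b" if "a < n" "b < n" "adjacent E a b" for a b
  proof -
    have "(a, b) \<in> edge_relation n E" "(b, a) \<in> edge_relation n E"
      using that adjacent_sym[of E a b] by (auto simp: edge_relation_def)
    thus ?thesis unfolding P_def by (meson rtrancl_into_rtrancl)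
  qed
  let ?u = "component_vec n s P" and ?v = "component_vec n s (\<lambda>k. \<not> P k)"
  have "?u \<in> mat_kernel (laplacian n E w s)" by (rule component_vec_in_kernel[OF G closed])
  moreover have "?u \<noteq> 0\<^sub>v n" by (rule component_vec_nonzero[OF G i]) (simp add: P_def)
  moreover have "?v \<in> mat_kernel (laplacian n E w s)"
    by (rule component_vec_in_kernel[OF G]) (use closed in blast)
  ultimately obtain c where "?v = c \<cdot>\<^sub>v ?u"
    using kernel_dim_eq_1D[OF laplacian_carrier dim] by blast
  hence "?v $ j = c * ?u $ j" using j by (simp add: component_vec_def)
  thus False using j ij vw_digraph_sqrt_nonzero[OF G j] by (simp add: component_vec_def P_def)
qed

text \<open>Since the Laplacian is Hermitian, 0 is a semisimple eigenvalue.\<close>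
lemma laplacian_alg_multiplicity_zero:
  "alg_multiplicity (laplacian n E w s) 0 = kernel_dim (laplacian n E w s)"
  unfolding alg_multiplicity_def
  by (intro order_zero_char_poly_eq_kernel_dim[OF laplacian_carrier]
      hermitian_kernel_square[OF laplacian_carrier laplacian_hermitian])

theorem theorem2p6:
  fixes n :: nat and E :: "(nat \<times> nat) set" and w s :: "nat \<Rightarrow> complex"
  assumes "n \<ge> 1"
    and "vw_complex_digraph n E w s"
  shows "underlying_connected n E \<longleftrightarrow> alg_multiplicity (laplacian n E w s) 0 = 1"
  unfolding laplacian_alg_multiplicity_zero
  using connected_kernel_dim[OF assms(2) assms(1)] disconnected_kernel_dim[OF assms(2)] by blast

end
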